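(* There exists a sequence $S\in\{0,1\}^\omega$ which is FS-deep but not LZ-deep.
   Context: $S\upharpoonright n$ is the length-$n$ prefix of $S$. A finite-state transducer (FST) is $T=(Q,q_0,\delta,\nu)$ with finite state set $Q$, start state $q_0$, $\delta:Q\times\{0,1\}\to Q$, $\nu:Q\times\{0,1\}\to\{0,1\}^*$; $T(\lambda)=\lambda$, $T(xb)=T(x)\nu(\hat\delta(x),b)$; $T$ is an ILFST if $x\mapsto(T(x),\hat\delta(x))$ is injective. FSTs are described by the following fixed binary representation. For $n\ge1$, $\mathrm{bin}(n)$ is the binary representation of $n$ and $\mathrm{string}(n)$ is $\mathrm{bin}(n)$ without its leading 1. For $x=x_1\cdots x_l$, $x^\dagger=x_10x_20\cdots x_{l-1}0x_l1$, $x^\diamond=\overline{(1x)^\dagger}$ (bitwise complement), $d(x)=x_1x_1\cdots x_lx_l$. For an FST with states $q_1,\dots,q_m$, write for $t=2i-1+b$: $(\delta(q_i,b),\nu(q_i,b))=(q_{1+(n_t\bmod m)},\mathrm{string}(n'_t))$; the table is encoded as $\pi=\mathrm{bin}(n_1)^\ddagger\mathrm{string}(n'_1)^\diamond\cdots\mathrm{bin}(n_{2m})^\ddagger\mathrm{string}(n'_{2m})^\diamond$, where $\mathrm{bin}(n_t)^\ddagger$ is empty for a self-loop and $\mathrm{bin}(n_t)^\dagger$ otherwise; $d(\mathrm{bin}(i))01\pi$ describes that FST with start state $q_i$. $|T|$ is the shortest description length, $\mathrm{FST}^{\le k}=\{T:|T|\le k\}$, and $D^k(x)=\min\{|y|:T\in\mathrm{FST}^{\le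 k},T(y)=x\}$. $S$ is FS-deep (infinitely often finite-state deep) if there is $\alpha>0$ such that for every $k$ there is $k'$ with $D^k(S\upharpoonright n)-D^{k'}(S\upharpoonright n)\ge\alpha n$ for infinitely many $n$. LZ denotes the Lempel–Ziv 78 compressor: it parses $x=x_1\cdots x_n$ into phrases, each distinct from all earlier ones (except possibly the last), with $x_i=x_{l(i)}b_i$, $l(i)<i$, $b_i\in\{0,1\}$, $x_0=\lambda$; it outputs $c_{l(1)}b_1\cdots c_{l(n)}b_n$ with $c_j$ a prefix-free encoding of index $j$. $S$ is LZ-deep if there is $\alpha>0$ such that for every ILFST $C$, $|C(S\upharpoonright n)|-|\mathrm{LZ}(S\upharpoonright n)|\ge\alpha n$ for all but finitely many $n$. *)

theory Defs
  imports Main "HOL-Library.Extended_Nat"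
begin

text \<open>Binary strings are bool lists (False = 0, True = 1); sequences are nat => bool.\<close>

definition prefix_of :: "(nat \<Rightarrow> bool) \<Rightarrow> nat \<Rightarrow> bool list" where
  "prefix_of S n = map S [0..<n]"

text \<open>bin n: binary representation of n (meaningful for n >= 1).\<close>
fun bin :: "nat \<Rightarrow> bool list" where
  "bin n = (if n \<le> 1 then [n = 1] else bin (n div 2) @ [odd n])"

definition bstring :: "nat \<Rightarrow> bool list" where
  "bstring n = tl (bin n)"

fun dag :: "bool list \<Rightarrow> bool list" where
  "dag [] = []"
| "dag [a] = [a, True]"
| "dag (a # xs) = a # False # dag xs"

definition diam :: "bool list \<Rightarrow> bool list" where
  "diam x = map Not (dag (True # x))"

definition dbl :: "bool list \<Rightarrow> bool list" where
  "dbl x = concat (map (\<lambda>b. [b, b]) x)"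

text \<open>States are 0..<fst_m T; state j corresponds to q_(j+1) of the paper.\<close>
record fst =
  fst_m :: nat
  fst_q0 :: nat
  fst_delta :: "nat \<Rightarrow> bool \<Rightarrow> nat"
  fst_nu :: "nat \<Rightarrow> bool \<Rightarrow> bool list"

definition fst_wf :: "fst \<Rightarrow> bool" where
  "fst_wf T \<longleftrightarrow> 1 \<le> fst_m T \<and> fst_q0 T < fst_m T \<and>
     (\<forall>q<fst_m T. \<forall>b. fst_delta T q b < fst_m T)"

fun run_out :: "fst \<Rightarrow> nat \<Rightarrow> bool list \<Rightarrow> bool list" where
  "run_out T q [] = []"
| "run_out T q (b # y) = fst_nu T q b @ run_out T (fst_delta T q b) y"

fun run_state :: "fst \<Rightarrow> nat \<Rightarrow> bool list \<Rightarrow> nat" where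
  "run_state T q [] = q"
| "run_state T q (b # y) = run_state T (fst_delta T q b) y"

definition fst_out :: "fst \<Rightarrow> bool list \<Rightarrow> bool list" where
  "fst_out T x = run_out T (fst_q0 T) x"

definition fst_state :: "fst \<Rightarrow> bool list \<Rightarrow> nat" where
  "fst_state T x = run_state T (fst_q0 T) x"

definition ILFST :: "fst \<Rightarrow> bool" where
  "ILFST T \<longleftrightarrow> fst_wf T \<and> inj (\<lambda>x. (fst_out T x, fst_state T x))"

text \<open>Encoding of table entry t = 2i-1+b (state j = i-1, bit b), given the chosen n_t.\<close>
definition entry_code :: "fst \<Rightarrow> (nat \<Rightarrow> bool \<Rightarrow> nat) \<Rightarrow> nat \<Rightarrow> bool \<Rightarrow> bool list" where
  "entry_code T ns j b =
     (if fst_delta T j b = j then [] else dag (bin (ns j b))) @ diam (fst_nu T j b)"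

text \<open>The output nu(q_i,b) = string(n'_t) determines n'_t uniquely.\<close>
definition fst_describes :: "bool list \<Rightarrow> fst \<Rightarrow> bool" where
  "fst_describes d T \<longleftrightarrow> fst_wf T \<and>
     (\<exists>ns. (\<forall>j<fst_m T. \<forall>b. 1 \<le> ns j b \<and> ns j b mod fst_m T = fst_delta T j b) \<and>
        d = dbl (bin (fst_q0 T + 1)) @ [False, True] @
            concat (map (\<lambda>j. entry_code T ns j False @ entry_code T ns j True) [0..<fst_m T]))"

definition fst_size :: "fst \<Rightarrow> nat" where
  "fst_size T = (LEAST l. \<exists>d. fst_describes d T \<and> length d = l)"

definition FST_le :: "nat \<Rightarrow> fst set" where
  "FST_le k = {T. fst_wf T \<and> fst_size T \<le> k}"

text \<open>D^k(x); infinity if no FST of size <= k outputs x.\<close>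
definition Dk :: "nat \<Rightarrow> bool list \<Rightarrow> enat" where
  "Dk k x = Inf {enat (length y) | y T. T \<in> FST_le k \<and> fst_out T y = x}"

definition FS_deep :: "(nat \<Rightarrow> bool) \<Rightarrow> bool" where
  "FS_deep S \<longleftrightarrow> (\<exists>\<alpha>::real. \<alpha> > 0 \<and> (\<forall>k. \<exists>k'. \<exists>\<^sub>\<infinity>n.
      \<exists>b. Dk k' (prefix_of S n) = enat b \<and>
          (\<forall>a. Dk k (prefix_of S n) = enat a \<longrightarrow> real a - real b \<ge> \<alpha> * real n)))"

text \<open>Prefix-free code for a pointer j >= 0: d(bin(|bin(j+1)|)) 01 string(j+1).\<close>
definition lz_code :: "nat \<Rightarrow> bool list" where
  "lz_code j = dbl (bin (length (bin (j + 1)))) @ [False, True] @ bstring (j + 1)"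

definition lz_next :: "bool list list \<Rightarrow> bool list \<Rightarrow> bool list" where
  "lz_next ds r =
     (if \<exists>k. 1 \<le> k \<and> k \<le> length r \<and> take k r \<notin> set ds
      then take (LEAST k. 1 \<le> k \<and> k \<le> length r \<and> take k r \<notin> set ds) r
      else r)"

fun lz_parse_aux :: "nat \<Rightarrow> bool list list \<Rightarrow> bool list \<Rightarrow> bool list list" where
  "lz_parse_aux 0 ds r = []"
| "lz_parse_aux (Suc f) ds r =
     (if r = [] then [] else
        (let p = lz_next ds r in p # lz_parse_aux f (ds @ [p]) (drop (length p) r)))"

definition lz_parse :: "bool list \<Rightarrow> bool list list" where
  "lz_parse x = lz_parse_aux (length x) [] x"

text \<open>Phrase i (1-based) is x_(l(i)) b_i with x_0 = empty word.\<close>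
definition lz_pointer :: "bool list list \<Rightarrow> nat \<Rightarrow> nat" where
  "lz_pointer ps i = (LEAST j. j < Suc i \<and> ([] # ps) ! j = butlast (ps ! i))"

definition LZ :: "bool list \<Rightarrow> bool list" where
  "LZ x = (let ps = lz_parse x in
     concat (map (\<lambda>i. lz_code (lz_pointer ps i) @ [last (ps ! i)]) [0..<length ps]))"

definition LZ_deep :: "(nat \<Rightarrow> bool) \<Rightarrow> bool" where
  "LZ_deep S \<longleftrightarrow> (\<exists>\<alpha>::real. \<alpha> > 0 \<and> (\<forall>C. ILFST C \<longrightarrow>
     (\<forall>\<^sub>F n in sequentially.
        real (length (fst_out C (prefix_of S n))) - real (length (LZ (prefix_of S n))) \<ge> \<alpha> * real n)))"

end

(*
  The sequence is a concatenation of zones; zone i consists of (i + 1)(P + 1) blocks, P being the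
  length of everything before it. In odd zones the block is a word z of length 2 L that no FST of
  size at most k can start to output, from any state and with at most k pending output bits, while
  reading at most L input bits; such a z exists by counting. Any FST of size at most k therefore
  needs more than L input bits per copy of z, whereas one fixed FST that prints z for every input
  bit after a marker needs only one; since every level k recurs, the sequence is FS-deep with
  constant 1/16. In even zones the block is a single 0, and an ILFST counting zeros modulo p
  shrinks these runs by the factor p. As the runs dominate their prefixes, for every alpha some
  ILFST compresses infinitely many prefixes below alpha n, so LZ-depth fails whatever the output
  of LZ.
*)
theory Submission
  imports Defs "HOL-Library.Nat_Bijection" "HOL-Library.Infinite_Set"
begin

lemma run_out_append:
  "run_out T q (u @ v) = run_out T q u @ run_out T (run_state T q u) v"
  by (induction u arbitrary: q) auto

lemma run_state_less: "fst_wf T \<Longrightarrow> q < fst_m T \<Longrightarrow> run_state T q y < fst_m T"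
  by (induction y arbitrary: q) (auto simp: fst_wf_def)

lemma length_run_out_le:
  assumes "fst_wf T" "\<forall>q<fst_m T. \<forall>b. length (fst_nu T q b) \<le> B" "q < fst_m T"
  shows "length (run_out T q y) \<le> B * length y"
  using assms(3)
proof (induction y arbitrary: q)
  case (Cons b y)
  have "fst_delta T q b < fst_m T" using assms(1) Cons.prems by (simp add: fst_wf_def)
  moreover have "length (fst_nu T q b) \<le> B" using assms(2) Cons.prems by blast
  ultimately show ?case using Cons.IH[of "fst_delta T q b"] by simp
qed simp

lemma exists_crossing_bounded_increments:
  fixes f :: "nat \<Rightarrow> nat"
  assumes "f 0 \<le> a" "a \<le> f n" "\<And>t. t < n \<Longrightarrow> f (Suc t) \<le> f t + B"
  shows "\<exists>t\<le>n. a \<le> f t \<and> f t \<le> a + B"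
  using assms
proof (induction n)
  case (Suc n)
  show ?case
  proof (cases "a \<le> f n")
    case True
    then have "\<exists>t\<le>n. a \<le> f t \<and> f t \<le> a + B"
      using Suc.IH[OF Suc.prems(1)] Suc.prems(3) by simp
    then show ?thesis using le_SucI by blast
  next
    case False
    with Suc.prems(2) Suc.prems(3)[of n] show ?thesis by (intro exI[of _ "Suc n"]) auto
  qed
qed auto

lemma run_out_cut:
  assumes wf: "fst_wf T" and bound: "\<forall>q<fst_m T. \<forall>b. length (fst_nu T q b) \<le> B"
    and q: "q < fst_m T" and a: "length u0 \<le> a" "a \<le> length (u0 @ run_out T q y)"
  obtains t u where "t \<le> length y" "length u \<le> B"
    "u0 @ run_out T q (take t y) = take a (u0 @ run_out T q y) @ u"
proof -
  define f where "f t = length (u0 @ run_out T q (take t y))" for t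
  have step: "f (Suc t) \<le> f t + B" if "t < length y" for t
  proof -
    have "take (Suc t) y = take t y @ [y ! t]" using that by (simp add: take_Suc_conv_app_nth)
    moreover have "run_state T q (take t y) < fst_m T" using run_state_less[OF wf q] .
    ultimately show ?thesis using bound by (simp add: f_def run_out_append)
  qed
  obtain t where t: "t \<le> length y" "a \<le> f t" "f t \<le> a + B"
    using exists_crossing_bounded_increments[of f a "length y" B] step a by (auto simp: f_def)
  have "u0 @ run_out T q (take t y) = take (f t) (u0 @ run_out T q y)"
    using run_out_append[of T q "take t y" "drop t y"] by (simp add: f_def)
  also have "\<dots> = take a (take (f t) (u0 @ run_out T q y)) @ drop a (take (f t) (u0 @ run_out T q y))"
    by (rule append_take_drop_id[symmetric])
  also have "take a (take (f t) (u0 @ run_out T q y)) = take a (u0 @ run_out T q y)"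
    using t(2) by (simp add: min_def)
  finally have "u0 @ run_out T q (take t y) =
      take a (u0 @ run_out T q y) @ drop a (take (f t) (u0 @ run_out T q y))" .
  moreover have "length (drop a (take (f t) (u0 @ run_out T q y))) \<le> B" using t(3) by simp
  ultimately show ?thesis using that t(1) by blast
qed

lemma repetitions_need_long_input:
  assumes wf: "fst_wf T" and bound: "\<forall>q<fst_m T. \<forall>b. length (fst_nu T q b) \<le> B"
    and "B < length z"
    and hard: "\<And>q u0 s. q < fst_m T \<Longrightarrow> length u0 \<le> B \<Longrightarrow> length s \<le> L \<Longrightarrow>
       take (length z) (u0 @ run_out T q s) \<noteq> z"
  shows "q < fst_m T \<Longrightarrow> length u0 \<le> B \<Longrightarrow>
    u0 @ run_out T q y = concat (replicate r z) @ v \<Longrightarrow> r * (L + 1) \<le> length y"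
proof (induction r arbitrary: q u0 y v)
  case (Suc r)
  have out: "u0 @ run_out T q y = z @ concat (replicate r z) @ v" using Suc.prems(3) by simp
  obtain t u where t: "t \<le> length y" "length u \<le> B"
    and cut: "u0 @ run_out T q (take t y) = z @ u"
    using run_out_cut[OF wf bound Suc.prems(1), of u0 "length z" y] Suc.prems(2) \<open>B < length z\<close>
    unfolding out by auto
  have "take (length z) (u0 @ run_out T q (take t y)) = z" using cut by simp
  then have "\<not> length (take t y) \<le> L" using hard[OF Suc.prems(1,2)] by blast
  then have long: "L + 1 \<le> t" using t(1) by simp
  have "u0 @ run_out T q y = z @ u @ run_out T (run_state T q (take t y)) (drop t y)"
    using cut run_out_append[of T q "take t y" "drop t y"] by simp
  then have "u @ run_out T (run_state T q (take t y)) (drop t y) = concat (replicate r z) @ v"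
    using out by simp
  from Suc.IH[OF run_state_less[OF wf Suc.prems(1)] t(2) this]
  have "r * (L + 1) \<le> length y - t" by simp
  then show ?case using long t(1) by (simp add: add.commute)
qed simp

lemma length_dag: "length (dag x) = 2 * length x"
  by (induction x rule: dag.induct) auto

lemma length_diam: "length (diam x) = 2 * length x + 2"
  by (simp add: diam_def length_dag)

lemma fst_describes_length_ge:
  assumes "fst_describes d T"
  shows "fst_m T \<le> length d" and "q < fst_m T \<Longrightarrow> length (fst_nu T q b) \<le> length d"
proof -
  obtain ns where d: "d = dbl (bin (fst_q0 T + 1)) @ [False, True] @
      concat (map (\<lambda>j. entry_code T ns j False @ entry_code T ns j True) [0..<fst_m T])"
    using assms unfolding fst_describes_def by blast
  define g where "g j = length (entry_code T ns j False @ entry_code T ns j True)" for j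
  have entry_ge: "2 * length (fst_nu T j b) + 2 \<le> length (entry_code T ns j b)" for j b
    by (simp add: entry_code_def length_diam)
  have g_ge: "length (fst_nu T j b) + 1 \<le> g j" for j b
    using entry_ge[of j b] by (cases b) (auto simp: g_def)
  have sum_le: "(\<Sum>j<fst_m T. g j) \<le> length d"
    unfolding d by (simp add: length_concat g_def atLeast0LessThan interv_sum_list_conv_sum_set_nat)
  have "1 \<le> g j" for j using g_ge[of j False] by simp
  then have "fst_m T \<le> (\<Sum>j<fst_m T. g j)"
    using sum_mono[of "{..<fst_m T}" "\<lambda>_. 1" g] by simp
  then show "fst_m T \<le> length d" using sum_le by linarith
  assume "q < fst_m T"
  then have "g q \<le> (\<Sum>j<fst_m T. g j)" by (intro member_le_sum) auto
  then show "length (fst_nu T q b) \<le> length d" using sum_le g_ge[of q b] by linarith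
qed

lemma fst_describes_exists:
  assumes "fst_wf T" shows "\<exists>d. fst_describes d T"
proof -
  define ns where "ns j b = fst_delta T j b + fst_m T" for j b
  have "\<forall>j<fst_m T. \<forall>b. 1 \<le> ns j b \<and> ns j b mod fst_m T = fst_delta T j b"
    using assms by (auto simp: ns_def fst_wf_def)
  then show ?thesis using assms unfolding fst_describes_def by blast
qed

lemma FST_le_bounds:
  assumes "T \<in> FST_le k"
  shows "fst_wf T" "fst_m T \<le> k" "\<forall>q<fst_m T. \<forall>b. length (fst_nu T q b) \<le> k"
proof -
  show wf: "fst_wf T" using assms by (simp add: FST_le_def)
  have "\<exists>d. fst_describes d T \<and> length d = fst_size T"
    unfolding fst_size_def by (rule LeastI_ex) (use fst_describes_exists[OF wf] in blast)
  then obtain d where "fst_describes d T" "length d \<le> k"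
    using assms by (auto simp: FST_le_def)
  then show "fst_m T \<le> k" "\<forall>q<fst_m T. \<forall>b. length (fst_nu T q b) \<le> k"
    using fst_describes_length_ge by (blast intro: le_trans)+
qed

text \<open>A finitary encoding of an FST, so that the FSTs of bounded size can be counted.\<close>
definition fst_table :: "fst \<Rightarrow> ((nat \<times> bool list) \<times> (nat \<times> bool list)) list" where
  "fst_table T = map (\<lambda>q. ((fst_delta T q False, fst_nu T q False),
     (fst_delta T q True, fst_nu T q True))) [0..<fst_m T]"

definition table_entry :: "((nat \<times> bool list) \<times> (nat \<times> bool list)) list \<Rightarrow> nat \<Rightarrow> bool \<Rightarrow> nat \<times> bool list" where
  "table_entry tb q b = (if b then snd (tb ! q) else fst (tb ! q))"

fun run_table :: "((nat \<times> bool list) \<times> (nat \<times> bool list)) list \<Rightarrow> nat \<Rightarrow> bool list \<Rightarrow> bool list" where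
  "run_table tb q [] = []"
| "run_table tb q (b # s) = snd (table_entry tb q b) @ run_table tb (fst (table_entry tb q b)) s"

lemma run_out_eq_run_table:
  "fst_wf T \<Longrightarrow> q < fst_m T \<Longrightarrow> run_out T q s = run_table (fst_table T) q s"
  by (induction s arbitrary: q) (auto simp: fst_table_def table_entry_def fst_wf_def)

definition table_params :: "nat \<Rightarrow> (((nat \<times> bool list) \<times> (nat \<times> bool list)) list \<times> nat \<times> bool list) set" where
  "table_params k =
     {tb. set tb \<subseteq> ({..<k} \<times> {w. length w \<le> k}) \<times> ({..<k} \<times> {w. length w \<le> k}) \<and>
       length tb \<le> k} \<times> {..<k} \<times> {u. length u \<le> k}"

lemma finite_bool_lists_length_le: "finite {w :: bool list. length w \<le> L}"
  using finite_lists_length_le[of "UNIV :: bool set" L] by auto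

lemma card_bool_lists_length_le: "card {w :: bool list. length w \<le> L} < 2 ^ Suc L"
proof -
  have "card {w :: bool list. length w \<le> L} = (\<Sum>i\<le>L. 2 ^ i)"
    using card_lists_length_le[of "UNIV :: bool set" L] by simp
  also have "\<dots> < 2 ^ Suc L" by (induction L) auto
  finally show ?thesis .
qed

lemma finite_table_params: "finite (table_params k)"
  unfolding table_params_def
  by (intro finite_cartesian_product finite_lists_length_le finite_bool_lists_length_le) auto

text \<open>\<open>u0\<close> is the part of an earlier transition output that is still pending when the run starts.\<close>
definition short_outputs :: "nat \<Rightarrow> nat \<Rightarrow> bool list set" where
  "short_outputs k L = {take (2 * L) (u0 @ run_out T q s) | T q u0 s.
     T \<in> FST_le k \<and> q < fst_m T \<and> length u0 \<le> k \<and> length s \<le> L}"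

lemma short_outputs_subset:
  "short_outputs k L \<subseteq> (\<lambda>((tb, q, u0), s). take (2 * L) (u0 @ run_table tb q s)) `
     (table_params k \<times> {s. length s \<le> L})"
proof
  fix w assume "w \<in> short_outputs k L"
  then obtain T q u0 s where T: "T \<in> FST_le k" "q < fst_m T" "length u0 \<le> k" "length s \<le> L"
    and w: "w = take (2 * L) (u0 @ run_out T q s)"
    unfolding short_outputs_def by blast
  note bounds = FST_le_bounds[OF T(1)]
  have "fst_delta T j b < k" if "j < fst_m T" for j b
    using bounds(1,2) that unfolding fst_wf_def by (meson less_le_trans)
  then have "set (fst_table T) \<subseteq> ({..<k} \<times> {w. length w \<le> k}) \<times> ({..<k} \<times> {w. length w \<le> k})"
    using bounds(3) unfolding fst_table_def by auto
  then have "((fst_table T, q, u0), s) \<in> table_params k \<times> {s. length s \<le> L}"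
    using T bounds(2) by (auto simp: table_params_def fst_table_def)
  moreover have "w = take (2 * L) (u0 @ run_table (fst_table T) q s)"
    using w run_out_eq_run_table[OF bounds(1) T(2)] by simp
  ultimately show "w \<in> (\<lambda>((tb, q, u0), s). take (2 * L) (u0 @ run_table tb q s)) `
     (table_params k \<times> {s. length s \<le> L})" by force
qed

text \<open>\<open>L \<ge> 8\<close> fixes the depth constant \<open>1/16\<close>; the summand \<open>2 c\<close> makes the
  \<open>2 ^ (2 L)\<close> words of length \<open>2 L\<close> outnumber the short outputs.\<close>
definition hard_len :: "nat \<Rightarrow> nat" where
  "hard_len k = k + 2 * card (table_params k) + 9"

lemma exists_word_not_short_output:
  "\<exists>z. length z = 2 * hard_len k \<and> z \<notin> short_outputs k (hard_len k)"
proof -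
  define c where "c = card (table_params k)"
  define L where "L = hard_len k"
  define params where "params = table_params k \<times> {s :: bool list. length s \<le> L}"
  define out where "out = (\<lambda>((tb, q, u0), s). take (2 * L) (u0 @ run_table tb q s))"
  have fin: "finite params"
    unfolding params_def using finite_table_params finite_bool_lists_length_le by blast
  have "card (short_outputs k L) \<le> card (out ` params)"
    using short_outputs_subset[of k L] fin unfolding out_def params_def
    by (intro card_mono) auto
  also have "\<dots> \<le> card params" using fin by (rule card_image_le)
  also have "\<dots> \<le> c * 2 ^ Suc L"
    using card_bool_lists_length_le[of L]
    by (simp add: params_def c_def card_cartesian_product)
  also have "\<dots> = (2 * c) * 2 ^ L" by simp
  also have "\<dots> < L * 2 ^ L" by (simp add: L_def c_def hard_len_def)
  also have "\<dots> < 2 ^ L * 2 ^ L" by (simp add: less_exp)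
  also have "\<dots> = card {z :: bool list. length z = 2 * L}"
    using card_lists_length_eq[of "UNIV :: bool set" "2 * L"]
    by (simp add: power_add[symmetric] mult_2)
  finally have less: "card (short_outputs k L) < card {z :: bool list. length z = 2 * L}" .
  have "finite (short_outputs k L)"
    using short_outputs_subset[of k L] finite_imageI[OF fin] unfolding out_def params_def
    by (rule finite_subset)
  then have "\<not> {z :: bool list. length z = 2 * L} \<subseteq> short_outputs k L"
    using less card_mono leD by blast
  then show ?thesis by (auto simp: L_def)
qed

definition hard_word :: "nat \<Rightarrow> bool list" where
  "hard_word k = (SOME z. length z = 2 * hard_len k \<and> z \<notin> short_outputs k (hard_len k))"

lemma length_hard_word: "length (hard_word k) = 2 * hard_len k"
  and hard_word_not_short_output: "hard_word k \<notin> short_outputs k (hard_len k)"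
  using someI_ex[OF exists_word_not_short_output[of k]] by (simp_all add: hard_word_def)

lemma Dk_le: "T \<in> FST_le k \<Longrightarrow> fst_out T y = x \<Longrightarrow> Dk k x \<le> enat (length y)"
  unfolding Dk_def by (rule Inf_lower) blast

lemma fst_out_repetitions_need_long_input:
  assumes wf: "fst_wf T" and bound: "\<forall>q<fst_m T. \<forall>b. length (fst_nu T q b) \<le> B"
    and "B < length z"
    and hard: "\<And>q u0 s. q < fst_m T \<Longrightarrow> length u0 \<le> B \<Longrightarrow> length s \<le> L \<Longrightarrow>
       take (length z) (u0 @ run_out T q s) \<noteq> z"
    and y: "fst_out T y = x @ concat (replicate r z)"
  shows "r * (L + 1) \<le> length y"
proof -
  have q0: "fst_q0 T < fst_m T" using wf by (simp add: fst_wf_def)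
  have "length [] \<le> length x" "length x \<le> length ([] @ run_out T (fst_q0 T) y)"
    using y by (simp_all add: fst_out_def)
  then obtain t u where "length u \<le> B"
    "[] @ run_out T (fst_q0 T) (take t y) = take (length x) ([] @ run_out T (fst_q0 T) y) @ u"
    by (rule run_out_cut[OF wf bound q0])
  then have u: "length u \<le> B" "run_out T (fst_q0 T) (take t y) = x @ u"
    using y by (simp_all add: fst_out_def)
  then have "u @ run_out T (run_state T (fst_q0 T) (take t y)) (drop t y) = concat (replicate r z) @ []"
    using y run_out_append[of T "fst_q0 T" "take t y" "drop t y"] by (simp add: fst_out_def)
  then have "r * (L + 1) \<le> length (drop t y)"
    using repetitions_need_long_input[OF wf bound \<open>B < length z\<close> hard]
      run_state_less[OF wf q0] u(1) by blast
  then show ?thesis by simp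
qed

lemma hard_word_not_output_prefix:
  assumes "T \<in> FST_le k" "q < fst_m T" "length u0 \<le> k" "length s \<le> hard_len k"
  shows "take (length (hard_word k)) (u0 @ run_out T q s) \<noteq> hard_word k"
  using hard_word_not_short_output[of k] assms length_hard_word[of k]
  unfolding short_outputs_def by force

lemma Dk_hard_repetitions_ge:
  assumes "Dk k (x @ concat (replicate r (hard_word k))) = enat a"
  shows "r * (hard_len k + 1) \<le> a"
proof -
  have "k < length (hard_word k)" using length_hard_word[of k] by (simp add: hard_len_def)
  then have "enat (r * (hard_len k + 1)) \<le> enat (length y)"
    if "T \<in> FST_le k" "fst_out T y = x @ concat (replicate r (hard_word k))" for T y
    using fst_out_repetitions_need_long_input[OF FST_le_bounds(1,3)[OF that(1)] _
        hard_word_not_output_prefix[OF that(1)] that(2)]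
    by simp
  then have "enat (r * (hard_len k + 1)) \<le> Dk k (x @ concat (replicate r (hard_word k)))"
    unfolding Dk_def by (auto intro: Inf_greatest)
  then show ?thesis using assms by simp
qed

text \<open>Reads the pairs \<open>0 b\<close> and copies \<open>b\<close>; after a \<open>1\<close> it outputs \<open>z\<close> for every further symbol.\<close>
definition repeat_fst :: "bool list \<Rightarrow> fst" where
  "repeat_fst z = \<lparr>fst_m = 3, fst_q0 = 0,
     fst_delta = (\<lambda>q b. if q = 0 then (if b then 2 else 1) else if q = 2 then 2 else 0),
     fst_nu = (\<lambda>q b. if q = 1 then [b] else if q = 2 then z else [])\<rparr>"

lemma Dk_repeat_fst_le:
  "Dk (fst_size (repeat_fst z)) (x @ concat (replicate r z)) \<le> enat (2 * length x + 1 + r)"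
proof -
  have repeat: "run_out (repeat_fst z) 2 (replicate r b) = concat (replicate r z)" for b
    by (induction r) (auto simp: repeat_fst_def)
  have copy: "run_out (repeat_fst z) 0 (concat (map (\<lambda>b. [False, b]) x) @ v) =
      x @ run_out (repeat_fst z) 0 v" for v
    by (induction x) (auto simp: repeat_fst_def)
  define y where "y = concat (map (\<lambda>b. [False, b]) x) @ True # replicate r False"
  have "fst_out (repeat_fst z) y = x @ concat (replicate r z)"
    using repeat copy by (simp add: y_def fst_out_def repeat_fst_def)
  moreover have "repeat_fst z \<in> FST_le (fst_size (repeat_fst z))"
    by (simp add: FST_le_def fst_wf_def repeat_fst_def)
  moreover have "length (concat (map (\<lambda>b. [False, b]) x)) = 2 * length x"
    by (induction x) auto
  then have "length y = 2 * length x + 1 + r" by (simp add: y_def)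
  ultimately show ?thesis using Dk_le by metis
qed

text \<open>State \<open>q\<close> counts the zeros read since the last output modulo \<open>p\<close>: every \<open>p\<close>-th
  zero is output as \<open>0\<close>, and a \<open>1\<close> read in state \<open>q\<close> is output as \<open>1 0\<^sup>q 1\<close>.\<close>
definition zero_run_fst :: "nat \<Rightarrow> fst" where
  "zero_run_fst p = \<lparr>fst_m = p, fst_q0 = 0,
     fst_delta = (\<lambda>q b. if b then 0 else if Suc q < p then Suc q else 0),
     fst_nu = (\<lambda>q b. if b then True # replicate q False @ [True]
       else if Suc q < p then [] else [False])\<rparr>"

fun zero_run_decode :: "nat \<Rightarrow> bool list \<Rightarrow> nat \<Rightarrow> bool list" where
  "zero_run_decode p [] f = replicate f False"
| "zero_run_decode p (False # w) f = replicate p False @ zero_run_decode p w f"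
| "zero_run_decode p (True # w) f =
     takeWhile Not w @ True # zero_run_decode p (drop (Suc (length (takeWhile Not w))) w) f"

lemma zero_run_decode_run_out:
  "q < p \<Longrightarrow> zero_run_decode p (run_out (zero_run_fst p) q x) (run_state (zero_run_fst p) q x) =
     replicate q False @ x"
proof (induction x arbitrary: q)
  case (Cons b x)
  have restart: "zero_run_decode p (run_out (zero_run_fst p) 0 x) (run_state (zero_run_fst p) 0 x) = x"
    using Cons by simp
  consider (one) b | (zero) "\<not> b" "Suc q < p" | (block) "\<not> b" "p = Suc q"
    using Cons.prems by linarith
  then show ?case
  proof cases
    case one
    have "takeWhile Not (replicate q False @ True # w) = replicate q False" for w
      by (induction q) auto
    with one restart show ?thesis by (simp add: zero_run_fst_def)
  next
    case zero
    with Cons.IH[of "Suc q"] show ?thesis by (simp add: zero_run_fst_def replicate_app_Cons_same)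
  next
    case block
    with restart show ?thesis by (simp add: zero_run_fst_def replicate_app_Cons_same)
  qed
qed simp

lemma ILFST_zero_run_fst: "1 \<le> p \<Longrightarrow> ILFST (zero_run_fst p)"
  unfolding ILFST_def
proof
  assume p: "1 \<le> p"
  then show "fst_wf (zero_run_fst p)" by (simp add: fst_wf_def zero_run_fst_def)
  show "inj (\<lambda>x. (fst_out (zero_run_fst p) x, fst_state (zero_run_fst p) x))"
  proof (rule injI)
    fix x y
    assume "(fst_out (zero_run_fst p) x, fst_state (zero_run_fst p) x) =
      (fst_out (zero_run_fst p) y, fst_state (zero_run_fst p) y)"
    then have "zero_run_decode p (run_out (zero_run_fst p) 0 x) (run_state (zero_run_fst p) 0 x) =
        zero_run_decode p (run_out (zero_run_fst p) 0 y) (run_state (zero_run_fst p) 0 y)"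
      by (simp add: fst_out_def fst_state_def zero_run_fst_def)
    then show "x = y" using zero_run_decode_run_out[of 0 p] p by simp
  qed
qed

lemma length_run_out_zero_run_fst_zeros:
  "q < p \<Longrightarrow> length (run_out (zero_run_fst p) q (replicate N False)) = (q + N) div p"
proof (induction N arbitrary: q)
  case (Suc N)
  show ?case
  proof (cases "Suc q < p")
    case True
    then show ?thesis using Suc.IH[of "Suc q"] by (simp add: zero_run_fst_def)
  next
    case False
    with Suc.prems have p: "p = Suc q" by simp
    have "(q + Suc N) div p = Suc (N div p)"
      using div_add_self1[of p N] by (simp add: p)
    then show ?thesis using Suc.IH[of 0] p by (simp add: zero_run_fst_def)
  qed
qed simp

lemma length_fst_out_zero_run_fst_append_zeros:
  assumes "1 \<le> p"
  shows "length (fst_out (zero_run_fst p) (x @ replicate N False)) \<le> (p + 1) * length x + N div p + 1"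
proof -
  have wf: "fst_wf (zero_run_fst p)" using ILFST_zero_run_fst[OF assms] by (simp add: ILFST_def)
  have q0: "0 < fst_m (zero_run_fst p)" using assms by (simp add: zero_run_fst_def)
  define q where "q = run_state (zero_run_fst p) 0 x"
  have q: "q < p" using run_state_less[OF wf q0] by (simp add: q_def zero_run_fst_def)
  have "length (run_out (zero_run_fst p) 0 x) \<le> (p + 1) * length x"
    using length_run_out_le[OF wf _ q0, of "p + 1"] by (simp add: zero_run_fst_def)
  moreover have "(q + N) div p \<le> N div p + 1"
    using div_le_mono[of "q + N" "p + N" p] q assms by simp
  ultimately show ?thesis
    using length_run_out_zero_run_fst_zeros[OF q, of N]
    by (simp add: fst_out_def run_out_append q_def zero_run_fst_def)
qed

text \<open>The odd zones visit every level \<open>k\<close> infinitely often.\<close>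
definition zone_level :: "nat \<Rightarrow> nat" where
  "zone_level i = fst (prod_decode (i div 2))"

definition zone :: "nat \<Rightarrow> nat \<Rightarrow> bool list" where
  "zone i P = (if even i then replicate ((i + 1) * (P + 1)) False
     else concat (replicate ((i + 1) * (P + 1)) (hard_word (zone_level i))))"

fun seq_prefix :: "nat \<Rightarrow> bool list" where
  "seq_prefix 0 = []"
| "seq_prefix (Suc i) = seq_prefix i @ zone i (length (seq_prefix i))"

definition witness_seq :: "nat \<Rightarrow> bool" where
  "witness_seq n = seq_prefix (Suc n) ! n"

lemma length_seq_prefix_ge: "i \<le> length (seq_prefix i)"
proof (induction i)
  case (Suc i)
  have "0 < length (hard_word (zone_level i))"
    using length_hard_word[of "zone_level i"] by (simp add: hard_len_def)
  then have "0 < length (zone i (length (seq_prefix i)))"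
    by (simp add: zone_def length_concat sum_list_replicate)
  moreover have "length (seq_prefix (Suc i)) =
      length (seq_prefix i) + length (zone i (length (seq_prefix i)))" by simp
  ultimately show ?case using Suc by linarith
qed simp

lemma seq_prefix_prefix: "i \<le> j \<Longrightarrow> \<exists>w. seq_prefix j = seq_prefix i @ w"
  by (induction j rule: dec_induct) auto

lemma prefix_of_witness_seq: "prefix_of witness_seq (length (seq_prefix i)) = seq_prefix i"
proof -
  have "witness_seq n = seq_prefix i ! n" if n: "n < length (seq_prefix i)" for n
  proof -
    obtain w w' where "seq_prefix (max i (Suc n)) = seq_prefix i @ w"
        "seq_prefix (max i (Suc n)) = seq_prefix (Suc n) @ w'"
      using seq_prefix_prefix[of i "max i (Suc n)"] seq_prefix_prefix[of "Suc n" "max i (Suc n)"]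
      by auto
    moreover have "n < length (seq_prefix (Suc n))"
      using length_seq_prefix_ge[of "Suc n"] by simp
    ultimately show ?thesis using n by (metis nth_append witness_seq_def)
  qed
  then show ?thesis by (intro nth_equalityI) (simp_all add: prefix_of_def)
qed

lemma depth_margin:
  fixes P r L a b :: nat
  assumes "8 \<le> L" "P + 1 \<le> r" "r * (L + 1) \<le> a" "b \<le> 2 * P + 1 + r"
  shows "1 / 16 * real (P + r * (2 * L)) \<le> real a - real b"
proof -
  define n where "n = P + r * (2 * L)"
  have "8 * P + 8 \<le> r * L" using mult_le_mono[OF assms(2,1)] by (simp add: mult.commute)
  moreover have "r * L + r \<le> a" using assms(3) by (simp add: algebra_simps)
  moreover have "r * (2 * L) = 2 * (r * L)" by simp
  ultimately have "n + 16 * b \<le> 16 * a" using assms(4) unfolding n_def by linarith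
  then have "real n + 16 * real b \<le> 16 * real a"
    using of_nat_le_iff[of "n + 16 * b" "16 * a", where 'a = real] by simp
  then show ?thesis unfolding n_def[symmetric] by simp
qed

lemma witness_seq_FS_deep: "FS_deep witness_seq"
  unfolding FS_deep_def
proof (intro exI[of _ "1 / 16"] conjI allI)
  show "(0 :: real) < 1 / 16" by simp
  fix k
  let ?z = "hard_word k" and ?L = "hard_len k"
  show "\<exists>k'. \<exists>\<^sub>\<infinity>n. \<exists>b. Dk k' (prefix_of witness_seq n) = enat b \<and>
      (\<forall>a. Dk k (prefix_of witness_seq n) = enat a \<longrightarrow> 1 / 16 * real n \<le> real a - real b)"
  proof (intro exI[of _ "fst_size (repeat_fst ?z)"], unfold INFM_nat, intro allI)
    fix m
    define i where "i = 2 * prod_encode (k, m) + 1"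
    define P where "P = length (seq_prefix i)"
    define r where "r = (i + 1) * (P + 1)"
    define n where "n = length (seq_prefix (Suc i))"
    have "odd i" "zone_level i = k" by (simp_all add: i_def zone_level_def)
    then have x: "prefix_of witness_seq n = seq_prefix i @ concat (replicate r ?z)"
      unfolding n_def prefix_of_witness_seq by (simp add: zone_def r_def P_def)
    have n: "n = P + r * (2 * ?L)"
      using arg_cong[OF x, of length] length_hard_word[of k]
      by (simp add: P_def length_concat sum_list_replicate prefix_of_def)
    have "m < n" using le_prod_encode_2[of m k] length_seq_prefix_ge[of "Suc i"]
      by (simp add: i_def n_def)
    moreover obtain b where b: "Dk (fst_size (repeat_fst ?z)) (prefix_of witness_seq n) = enat b"
      "b \<le> 2 * P + 1 + r"
      using Dk_repeat_fst_le[of ?z "seq_prefix i" r] unfolding x P_def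
      by (cases "Dk (fst_size (repeat_fst ?z)) (seq_prefix i @ concat (replicate r ?z))") auto
    moreover have "1 / 16 * real n \<le> real a - real b"
      if "Dk k (prefix_of witness_seq n) = enat a" for a
      using depth_margin[of ?L P r a b] Dk_hard_repetitions_ge[of k _ r a] that x b(2) n
      by (simp add: r_def hard_len_def)
    ultimately show "\<exists>n>m. \<exists>b. Dk (fst_size (repeat_fst ?z)) (prefix_of witness_seq n) = enat b \<and>
      (\<forall>a. Dk k (prefix_of witness_seq n) = enat a \<longrightarrow> 1 / 16 * real n \<le> real a - real b)"
      by blast
  qed
qed

lemma compression_margin:
  fixes \<alpha> :: real and p i P N c :: nat
  assumes p: "1 \<le> p" "2 \<le> \<alpha> * p" and i: "2 * (p + 1) \<le> \<alpha> * (i + 1)"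
    and N: "N = (i + 1) * (P + 1)" and c: "c \<le> (p + 1) * P + N div p + 1"
  shows "real c < \<alpha> * real (P + N)"
proof -
  have "0 < \<alpha> * p" using p(2) by linarith
  then have \<alpha>: "0 < \<alpha>" by (simp add: zero_less_mult_iff)
  have "real (N div p) \<le> real N / real p" by (rule of_nat_div_le_of_nat)
  also have "\<dots> \<le> \<alpha> * real N / 2"
    using mult_right_mono[OF p(2), of "real N"] p(1) by (simp add: field_simps)
  finally have zeros: "real (N div p) \<le> \<alpha> * real N / 2" .
  have "real ((p + 1) * P + 1) < real ((p + 1) * (P + 1))" using p(1) by simp
  also have "\<dots> \<le> \<alpha> * real N / 2"
    using mult_right_mono[OF i, of "real P + 1"] by (simp add: N algebra_simps)
  finally have "real c < \<alpha> * real N" using c zeros by linarith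
  also have "\<dots> \<le> \<alpha> * real (P + N)" using \<alpha> by simp
  finally show ?thesis .
qed

lemma zero_run_fst_compresses_witness_seq:
  assumes "0 < \<alpha>"
  obtains p where "ILFST (zero_run_fst p)"
    "\<exists>\<^sub>\<infinity>n. real (length (fst_out (zero_run_fst p) (prefix_of witness_seq n))) < \<alpha> * real n"
proof -
  obtain p :: nat where "2 / \<alpha> < real p" using reals_Archimedean2 by blast
  then have "2 < \<alpha> * p" using assms by (simp add: pos_divide_less_eq mult.commute)
  then have p: "1 \<le> p" "2 \<le> \<alpha> * p" by (cases "p = 0", simp_all)
  obtain i0 :: nat where "2 * (p + 1) / \<alpha> < real i0" using reals_Archimedean2 by blast
  then have "2 * (p + 1) < \<alpha> * i0" using assms by (simp add: pos_divide_less_eq mult.commute)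
  then have i0: "2 * (p + 1) \<le> \<alpha> * i0" by linarith
  have "\<exists>n>m. real (length (fst_out (zero_run_fst p) (prefix_of witness_seq n))) < \<alpha> * real n" for m
  proof -
    define i where "i = 2 * (m + i0)"
    define P where "P = length (seq_prefix i)"
    define N where "N = (i + 1) * (P + 1)"
    define n where "n = length (seq_prefix (Suc i))"
    have "even i" by (simp add: i_def)
    then have x: "prefix_of witness_seq n = seq_prefix i @ replicate N False"
      unfolding n_def prefix_of_witness_seq by (simp add: zone_def N_def P_def)
    have "m < n" using length_seq_prefix_ge[of "Suc i"] by (simp add: i_def n_def)
    moreover have "\<alpha> * i0 \<le> \<alpha> * (i + 1)" using assms by (simp add: i_def)
    with i0 have "2 * (p + 1) \<le> \<alpha> * (i + 1)" by linarith
    then have "real (length (fst_out (zero_run_fst p) (prefix_of witness_seq n))) < \<alpha> * real (P + N)"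
      using compression_margin[OF p] length_fst_out_zero_run_fst_append_zeros[OF p(1)] N_def
      unfolding x P_def by blast
    moreover have "n = P + N" using arg_cong[OF x, of length] by (simp add: P_def prefix_of_def)
    ultimately show ?thesis by blast
  qed
  then show ?thesis using that ILFST_zero_run_fst[OF p(1)] unfolding INFM_nat by blast
qed

lemma witness_seq_not_LZ_deep: "\<not> LZ_deep witness_seq"
proof
  assume "LZ_deep witness_seq"
  then obtain \<alpha> :: real where "0 < \<alpha>" and deep: "\<And>C. ILFST C \<Longrightarrow> \<forall>\<^sub>F n in sequentially.
      \<alpha> * real n \<le> real (length (fst_out C (prefix_of witness_seq n))) -
        real (length (LZ (prefix_of witness_seq n)))"
    unfolding LZ_deep_def by blast
  obtain p where C: "ILFST (zero_run_fst p)"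
    and small: "\<exists>\<^sub>\<infinity>n. real (length (fst_out (zero_run_fst p) (prefix_of witness_seq n))) < \<alpha> * real n"
    using zero_run_fst_compresses_witness_seq[OF \<open>0 < \<alpha>\<close>] by blast
  have "\<forall>\<^sub>F n in sequentially. \<alpha> * real n \<le> real (length (fst_out (zero_run_fst p) (prefix_of witness_seq n)))"
    using deep[OF C] by (rule eventually_mono) simp
  from frequently_eventually_conj[OF small[unfolded cofinite_eq_sequentially] this]
  show False using frequently_ex by fastforce
qed

theorem mainTheorem8:
  shows "\<exists>S :: nat \<Rightarrow> bool. FS_deep S \<and> \<not> LZ_deep S"
  using witness_seq_FS_deep witness_seq_not_LZ_deep by blast

end
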